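(* Let $D$ be a pv-monoid (idempotent, with symmetric valuation function) that is left-$\oplus$-distributive, $P$ a nonempty finite set of ports, $\phi$ a PIL formula over $P$, and $\zeta_1,\zeta_2\in PCL(D,P)$. Then $\phi\otimes(\zeta_1\uplus\zeta_2)\equiv(\phi\otimes\zeta_1)\uplus(\phi\otimes\zeta_2)$.
   Context: A valuation monoid $(D,\oplus,\mathrm{val},0)$ consists of a commutative monoid $(D,\oplus,0)$ and a map $\mathrm{val}:D^+\to D$ ($D^+$ = nonempty finite sequences over $D$) with $\mathrm{val}(d)=d$ and $\mathrm{val}(d_1,\dots,d_n)=0$ whenever some $d_i=0$. A pv-monoid $(D,\oplus,\mathrm{val},\otimes,0,1)$ is a valuation monoid with a binary operation $\otimes$ and an element $1$ such that $\mathrm{val}(1,\dots,1)=1$ for any $n\ge1$ arguments, $0\otimes d=d\otimes0=0$, $1\otimes d=d\otimes1=d$. Standing assumption: $D$ is idempotent and $\mathrm{val}$ is symmetric. $D$ is left-$\oplus$-distributive if $d\otimes(d_1\oplus d_2)=(d\otimes d_1)\oplus(d\otimes d_2)$ for all $d,d_1,d_2$. $I(P)$ is the set of nonempty subsets of $P$, $C(P)$ the set of nonempty subsets of $I(P)$. PIL formulas: $\phi::=true\mid p\mid\overline{\phi}\mid\phi\vee\phi$ ($p\in P$), with $\alpha\models_i true$, $\alpha\models_i p$ iff $p\in\alpha$, $\alpha\models_i\overline\phi$ iff $\alpha\not\models_i\phi$, disjunction as usual. PCL formulas: $f::=true\mid\phi\mid\neg f\mid f\sqcup f\mid f+f$;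 $\gamma\models\phi$ iff every $\alpha\in\gamma$ satisfies $\phi$; $\neg,\sqcup$ are complement and union; $\gamma\models f_1+f_2$ iff $\gamma=\gamma_1\cup\gamma_2$ with $\gamma_1,\gamma_2\in C(P)$, $\gamma_1\models f_1,\gamma_2\models f_2$. w$_{\text{pvm}}$PCL formulas ($PCL(D,P)$): $\zeta::=d\mid f\mid\zeta\oplus\zeta\mid\zeta\otimes\zeta\mid\zeta\uplus\zeta\mid *\zeta$ (in particular a PIL formula is such a formula); semantics $\|\zeta\|:C(P)\to D$: $\|d\|(\gamma)=d$; $\|f\|(\gamma)\in\{0,1\}$ is $1$ iff $\gamma\models f$; $\oplus,\otimes$ pointwise; $\|\zeta_1\uplus\zeta_2\|(\gamma)=\bigoplus(\|\zeta_1\|(\gamma_1)\otimes\|\zeta_2\|(\gamma_2))$ over disjoint $\gamma_1,\gamma_2\in C(P)$ with union $\gamma$; $\|*\zeta\|(\gamma)=\bigoplus_{n>0}\bigoplus\mathrm{val}(\|\zeta\|(\gamma_1),\dots,\|\zeta\|(\gamma_n))$ over pairwise disjoint $\gamma_1,\dots,\gamma_n\in C(P)$ with union $\gamma$. $\equiv$ means equality of semantics on all of $C(P)$. An empty $\oplus$-sum is $0$. *)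

theory Defs
  imports Main "HOL-Library.Multiset"
begin

text \<open>A pv-monoid (D, add, val, mul, zr, un) over the carrier type 'd.
  The valuation function val is given on all lists but only its values on
  nonempty lists are relevant.\<close>

definition valuation_monoid ::
  "('d \<Rightarrow> 'd \<Rightarrow> 'd) \<Rightarrow> ('d list \<Rightarrow> 'd) \<Rightarrow> 'd \<Rightarrow> bool" where
  "valuation_monoid add val zr \<longleftrightarrow>
     (\<forall>a b c. add (add a b) c = add a (add b c)) \<and>
     (\<forall>a b. add a b = add b a) \<and>
     (\<forall>a. add zr a = a) \<and>
     (\<forall>d. val [d] = d) \<and>
     (\<forall>ds. ds \<noteq> [] \<and> zr \<in> set ds \<longrightarrow> val ds = zr)"

definition pv_monoid ::
  "('d \<Rightarrow> 'd \<Rightarrow> 'd) \<Rightarrow> ('d list \<Rightarrow> 'd) \<Rightarrow> ('d \<Rightarrow> 'd \<Rightarrow> 'd) \<Rightarrow> 'd \<Rightarrow> 'd \<Rightarrow> bool" where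
  "pv_monoid add val mul zr un \<longleftrightarrow>
     valuation_monoid add val zr \<and>
     (\<forall>n::nat. n \<ge> 1 \<longrightarrow> val (replicate n un) = un) \<and>
     (\<forall>d. mul zr d = zr \<and> mul d zr = zr) \<and>
     (\<forall>d. mul un d = d \<and> mul d un = d)"

definition idempotent_plus :: "('d \<Rightarrow> 'd \<Rightarrow> 'd) \<Rightarrow> bool" where
  "idempotent_plus add \<longleftrightarrow> (\<forall>d. add d d = d)"

definition symmetric_val :: "('d list \<Rightarrow> 'd) \<Rightarrow> bool" where
  "symmetric_val val \<longleftrightarrow>
     (\<forall>xs ys. xs \<noteq> [] \<and> mset xs = mset ys \<longrightarrow> val xs = val ys)"

definition left_plus_distributive :: "('d \<Rightarrow> 'd \<Rightarrow> 'd) \<Rightarrow> ('d \<Rightarrow> 'd \<Rightarrow> 'd) \<Rightarrow> bool" where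
  "left_plus_distributive add mul \<longleftrightarrow>
     (\<forall>d d1 d2. mul d (add d1 d2) = add (mul d d1) (mul d d2))"

text \<open>Finite sum over a set of values. Since add is idempotent, summing
  the set of values of a finite family equals summing the family.
  The empty sum is zr.\<close>

definition bigplus :: "('d \<Rightarrow> 'd \<Rightarrow> 'd) \<Rightarrow> 'd \<Rightarrow> 'd set \<Rightarrow> 'd" where
  "bigplus add zr S = Finite_Set.fold add zr S"

definition Inter :: "'p set \<Rightarrow> 'p set set" where
  "Inter P = {\<alpha>. \<alpha> \<noteq> {} \<and> \<alpha> \<subseteq> P}"

definition Conf :: "'p set \<Rightarrow> 'p set set set" where
  "Conf P = {\<gamma>. \<gamma> \<noteq> {} \<and> \<gamma> \<subseteq> Inter P}"

datatype 'p pil = PTrue | Port 'p | PNeg "'p pil" | POr "'p pil" "'p pil"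

primrec pil_ports :: "'p pil \<Rightarrow> 'p set" where
  "pil_ports PTrue = {}"
| "pil_ports (Port p) = {p}"
| "pil_ports (PNeg \<phi>) = pil_ports \<phi>"
| "pil_ports (POr \<phi> \<psi>) = pil_ports \<phi> \<union> pil_ports \<psi>"

primrec pil_sat :: "'p set \<Rightarrow> 'p pil \<Rightarrow> bool" where
  "pil_sat \<alpha> PTrue = True"
| "pil_sat \<alpha> (Port p) = (p \<in> \<alpha>)"
| "pil_sat \<alpha> (PNeg \<phi>) = (\<not> pil_sat \<alpha> \<phi>)"
| "pil_sat \<alpha> (POr \<phi> \<psi>) = (pil_sat \<alpha> \<phi> \<or> pil_sat \<alpha> \<psi>)"

datatype 'p pcl = CTrue | CPil "'p pil" | CNeg "'p pcl"
  | CUnion "'p pcl" "'p pcl" | CPlus "'p pcl" "'p pcl"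

primrec pcl_ports :: "'p pcl \<Rightarrow> 'p set" where
  "pcl_ports CTrue = {}"
| "pcl_ports (CPil \<phi>) = pil_ports \<phi>"
| "pcl_ports (CNeg f) = pcl_ports f"
| "pcl_ports (CUnion f g) = pcl_ports f \<union> pcl_ports g"
| "pcl_ports (CPlus f g) = pcl_ports f \<union> pcl_ports g"

primrec pcl_sat :: "'p set \<Rightarrow> 'p set set \<Rightarrow> 'p pcl \<Rightarrow> bool" where
  "pcl_sat P \<gamma> CTrue = True"
| "pcl_sat P \<gamma> (CPil \<phi>) = (\<forall>\<alpha>\<in>\<gamma>. pil_sat \<alpha> \<phi>)"
| "pcl_sat P \<gamma> (CNeg f) = (\<not> pcl_sat P \<gamma> f)"
| "pcl_sat P \<gamma> (CUnion f g) = (pcl_sat P \<gamma> f \<or> pcl_sat P \<gamma> g)"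
| "pcl_sat P \<gamma> (CPlus f g) =
     (\<exists>\<gamma>1 \<gamma>2. \<gamma>1 \<in> Conf P \<and> \<gamma>2 \<in> Conf P \<and> \<gamma> = \<gamma>1 \<union> \<gamma>2 \<and>
              pcl_sat P \<gamma>1 f \<and> pcl_sat P \<gamma>2 g)"

datatype ('p, 'd) wpcl = WConst 'd | WPcl "'p pcl"
  | WPlus "('p, 'd) wpcl" "('p, 'd) wpcl"
  | WTimes "('p, 'd) wpcl" "('p, 'd) wpcl"
  | WUplus "('p, 'd) wpcl" "('p, 'd) wpcl"
  | WStar "('p, 'd) wpcl"

primrec wpcl_ports :: "('p, 'd) wpcl \<Rightarrow> 'p set" where
  "wpcl_ports (WConst d) = {}"
| "wpcl_ports (WPcl f) = pcl_ports f"
| "wpcl_ports (WPlus a b) = wpcl_ports a \<union> wpcl_ports b"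
| "wpcl_ports (WTimes a b) = wpcl_ports a \<union> wpcl_ports b"
| "wpcl_ports (WUplus a b) = wpcl_ports a \<union> wpcl_ports b"
| "wpcl_ports (WStar a) = wpcl_ports a"

abbreviation wpil :: "'p pil \<Rightarrow> ('p, 'd) wpcl" where
  "wpil \<phi> \<equiv> WPcl (CPil \<phi>)"

primrec wsem ::
  "('d \<Rightarrow> 'd \<Rightarrow> 'd) \<Rightarrow> ('d list \<Rightarrow> 'd) \<Rightarrow> ('d \<Rightarrow> 'd \<Rightarrow> 'd) \<Rightarrow> 'd \<Rightarrow> 'd \<Rightarrow>
   'p set \<Rightarrow> ('p, 'd) wpcl \<Rightarrow> 'p set set \<Rightarrow> 'd" where
  "wsem add val mul zr un P (WConst d) \<gamma> = d"
| "wsem add val mul zr un P (WPcl f) \<gamma> = (if pcl_sat P \<gamma> f then un else zr)"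
| "wsem add val mul zr un P (WPlus a b) \<gamma> =
     add (wsem add val mul zr un P a \<gamma>) (wsem add val mul zr un P b \<gamma>)"
| "wsem add val mul zr un P (WTimes a b) \<gamma> =
     mul (wsem add val mul zr un P a \<gamma>) (wsem add val mul zr un P b \<gamma>)"
| "wsem add val mul zr un P (WUplus a b) \<gamma> =
     bigplus add zr
       {mul (wsem add val mul zr un P a \<gamma>1) (wsem add val mul zr un P b \<gamma>2) | \<gamma>1 \<gamma>2.
          \<gamma>1 \<in> Conf P \<and> \<gamma>2 \<in> Conf P \<and> \<gamma>1 \<inter> \<gamma>2 = {} \<and> \<gamma>1 \<union> \<gamma>2 = \<gamma>}"
| "wsem add val mul zr un P (WStar a) \<gamma> =
     bigplus add zr
       {val (map (wsem add val mul zr un P a) gs) | gs.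
          gs \<noteq> [] \<and> set gs \<subseteq> Conf P \<and>
          (\<forall>i j. i < length gs \<and> j < length gs \<and> i \<noteq> j \<longrightarrow> gs ! i \<inter> gs ! j = {}) \<and>
          \<Union> (set gs) = \<gamma>}"

definition wequiv ::
  "('d \<Rightarrow> 'd \<Rightarrow> 'd) \<Rightarrow> ('d list \<Rightarrow> 'd) \<Rightarrow> ('d \<Rightarrow> 'd \<Rightarrow> 'd) \<Rightarrow> 'd \<Rightarrow> 'd \<Rightarrow>
   'p set \<Rightarrow> ('p, 'd) wpcl \<Rightarrow> ('p, 'd) wpcl \<Rightarrow> bool" where
  "wequiv add val mul zr un P z1 z2 \<longleftrightarrow>
     (\<forall>\<gamma>\<in>Conf P. wsem add val mul zr un P z1 \<gamma> = wsem add val mul zr un P z2 \<gamma>)"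

end

theory Submission
  imports Defs
begin

text \<open>The weight of a PIL formula \<open>\<phi>\<close> at \<open>\<gamma>\<close> is \<open>1\<close> or \<open>0\<close>, and \<open>\<gamma>\<close> satisfies \<open>\<phi>\<close>
  iff every part of a decomposition \<open>\<gamma> = \<gamma>\<^sub>1 \<union> \<gamma>\<^sub>2\<close> does. If it does, both sides
  equal \<open>\<zeta>\<^sub>1 \<uplus> \<zeta>\<^sub>2\<close> at \<open>\<gamma>\<close>; otherwise every summand on the right has a factor \<open>0\<close>,
  so both sides are \<open>0\<close>. Hence only the pv-monoid laws for \<open>0\<close> and \<open>1\<close> are needed.\<close>

lemma bigplus_subset_zero:
  assumes "valuation_monoid add val zr" and "S \<subseteq> {zr}"
  shows "bigplus add zr S = zr"
proof -
  from assms(1) obtain assoc: "\<forall>a b c. add (add a b) c = add a (add b c)"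
    and comm: "\<forall>a b. add a b = add b a" and zr_add: "\<forall>a. add zr a = a"
    unfolding valuation_monoid_def by (elim conjE)
  interpret comp_fun_commute add
  proof
    fix x y
    show "add y \<circ> add x = add x \<circ> add y"
      using assoc comm by (simp add: fun_eq_iff)
  qed
  have "S = {} \<or> S = {zr}"
    using assms(2) by blast
  then show ?thesis
    using zr_add by (auto simp: bigplus_def)
qed

lemma setcompr2_cong:
  assumes "\<And>x y. Q x y \<Longrightarrow> f x y = g x y"
  shows "{f x y | x y. Q x y} = {g x y | x y. Q x y}"
  using assms by force

lemma wsem_times_wpil:
  assumes "pv_monoid add val mul zr un"
  shows "wsem add val mul zr un P (WTimes (wpil \<phi>) \<zeta>) \<gamma> =
    (if \<forall>\<alpha>\<in>\<gamma>. pil_sat \<alpha> \<phi> then wsem add val mul zr un P \<zeta> \<gamma> else zr)"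
  using assms by (simp add: pv_monoid_def)

lemma wsem_uplus_times_wpil:
  assumes pv: "pv_monoid add val mul zr un"
  shows "wsem add val mul zr un P (WUplus (WTimes (wpil \<phi>) \<zeta>1) (WTimes (wpil \<phi>) \<zeta>2)) \<gamma> =
    (if \<forall>\<alpha>\<in>\<gamma>. pil_sat \<alpha> \<phi> then wsem add val mul zr un P (WUplus \<zeta>1 \<zeta>2) \<gamma> else zr)"
proof -
  let ?w = "wsem add val mul zr un P"
  let ?sat = "\<lambda>\<gamma>. \<forall>\<alpha>\<in>\<gamma>. pil_sat \<alpha> \<phi>"
  let ?split = "\<lambda>\<gamma>1 \<gamma>2. \<gamma>1 \<in> Conf P \<and> \<gamma>2 \<in> Conf P \<and> \<gamma>1 \<inter> \<gamma>2 = {} \<and> \<gamma>1 \<union> \<gamma>2 = \<gamma>"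
  from pv obtain vm: "valuation_monoid add val zr"
    and mul_zr: "\<forall>d. mul zr d = zr \<and> mul d zr = zr"
    and mul_un: "\<forall>d. mul un d = d \<and> mul d un = d"
    unfolding pv_monoid_def by (elim conjE)
  have summand: "mul (?w (WTimes (wpil \<phi>) \<zeta>1) \<gamma>1) (?w (WTimes (wpil \<phi>) \<zeta>2) \<gamma>2) =
      (if ?sat \<gamma> then mul (?w \<zeta>1 \<gamma>1) (?w \<zeta>2 \<gamma>2) else zr)"
    if "?split \<gamma>1 \<gamma>2" for \<gamma>1 \<gamma>2
  proof -
    have "?sat \<gamma> \<longleftrightarrow> ?sat \<gamma>1 \<and> ?sat \<gamma>2"
      using that by blast
    then show ?thesis
      using mul_zr mul_un by (simp add: wsem_times_wpil[OF pv] del: wsem.simps(4))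
  qed
  have "?w (WUplus (WTimes (wpil \<phi>) \<zeta>1) (WTimes (wpil \<phi>) \<zeta>2)) \<gamma> =
      bigplus add zr {if ?sat \<gamma> then mul (?w \<zeta>1 \<gamma>1) (?w \<zeta>2 \<gamma>2) else zr | \<gamma>1 \<gamma>2. ?split \<gamma>1 \<gamma>2}"
    unfolding wsem.simps(5) using summand by (intro arg_cong[where f = "bigplus add zr"] setcompr2_cong)
  also have "\<dots> = (if ?sat \<gamma> then ?w (WUplus \<zeta>1 \<zeta>2) \<gamma> else zr)"
  proof (cases "?sat \<gamma>")
    case False
    then show ?thesis
      unfolding if_not_P[OF False] by (intro bigplus_subset_zero[OF vm]) blast
  qed simp
  finally show ?thesis .
qed

theorem mainTheorem8:
  fixes add mul :: "'d \<Rightarrow> 'd \<Rightarrow> 'd" and val :: "'d list \<Rightarrow> 'd"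
    and zr un :: 'd and P :: "'p set"
    and \<phi> :: "'p pil" and \<zeta>1 \<zeta>2 :: "('p, 'd) wpcl"
  assumes "pv_monoid add val mul zr un"
    and "idempotent_plus add"
    and "symmetric_val val"
    and "left_plus_distributive add mul"
    and "finite P" and "P \<noteq> {}"
    and "pil_ports \<phi> \<subseteq> P"
    and "wpcl_ports \<zeta>1 \<subseteq> P" and "wpcl_ports \<zeta>2 \<subseteq> P"
  shows "wequiv add val mul zr un P
           (WTimes (wpil \<phi>) (WUplus \<zeta>1 \<zeta>2))
           (WUplus (WTimes (wpil \<phi>) \<zeta>1) (WTimes (wpil \<phi>) \<zeta>2))"
  unfolding wequiv_def wsem_times_wpil[OF assms(1)] wsem_uplus_times_wpil[OF assms(1)]
  by simp

end
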